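(* Let $\Gamma$ be a distance-regular graph with valency $k\geq 3$, diameter $D\geq 3$, intersection numbers $a_i,b_i,c_i$, and distinct eigenvalues $k=\theta_0>\theta_1>\cdots>\theta_D$. Then: (i) $\theta_D < \frac{a_1-\sqrt{a_1^2+4k}}{2}$; (ii) $\theta_1 \geq \min\left\{\frac{a_1+\sqrt{a_1^2+4k}}{2},\, a_3\right\}$; (iii) if $D\geq 4$, then $\theta_1\geq \frac{a_1+\sqrt{a_1^2+4k}}{2}$.
   Context: All graphs are finite, simple, undirected and connected. For vertices $x,y$, $d(x,y)$ is the graph distance, $D=\max d(x,y)$ is the diameter, and $\Gamma_i(x)$ is the set of vertices at distance exactly $i$ from $x$. $\Gamma$ is distance-regular if there are integers $b_i,c_i$ such that for all $x,y$ with $d(x,y)=i$, $y$ has exactly $c_i$ neighbours in $\Gamma_{i-1}(x)$ and exactly $b_i$ neighbours in $\Gamma_{i+1}(x)$; then $\Gamma$ is regular of valency $k=b_0$, and $a_i:=k-b_i-c_i$ (the number of neighbours of $y$ in $\Gamma_i(x)$). The eigenvalues of $\Gamma$ are those of its adjacency matrix; a distance-regular graph of diameter $D$ has exactly $D+1$ distinct eigenvalues. *)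

theory Defs
  imports Complex_Main
begin

definition simple_graph :: "'a set \<Rightarrow> ('a \<Rightarrow> 'a \<Rightarrow> bool) \<Rightarrow> bool" where
  "simple_graph V E \<longleftrightarrow> finite V \<and> V \<noteq> {} \<and>
     (\<forall>x y. E x y \<longrightarrow> x \<in> V \<and> y \<in> V) \<and>
     (\<forall>x y. E x y \<longrightarrow> E y x) \<and> (\<forall>x. \<not> E x x)"

fun walk :: "'a set \<Rightarrow> ('a \<Rightarrow> 'a \<Rightarrow> bool) \<Rightarrow> nat \<Rightarrow> 'a \<Rightarrow> 'a \<Rightarrow> bool" where
  "walk V E 0 x y = (x \<in> V \<and> x = y)"
| "walk V E (Suc n) x y = (\<exists>z\<in>V. E x z \<and> walk V E n z y)"

definition connected_graph :: "'a set \<Rightarrow> ('a \<Rightarrow> 'a \<Rightarrow> bool) \<Rightarrow> bool" where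
  "connected_graph V E \<longleftrightarrow> (\<forall>x\<in>V. \<forall>y\<in>V. \<exists>n. walk V E n x y)"

definition gdist :: "'a set \<Rightarrow> ('a \<Rightarrow> 'a \<Rightarrow> bool) \<Rightarrow> 'a \<Rightarrow> 'a \<Rightarrow> nat" where
  "gdist V E x y = (LEAST n. walk V E n x y)"

definition diameter :: "'a set \<Rightarrow> ('a \<Rightarrow> 'a \<Rightarrow> bool) \<Rightarrow> nat" where
  "diameter V E = Max {gdist V E x y | x y. x \<in> V \<and> y \<in> V}"

definition sphere :: "'a set \<Rightarrow> ('a \<Rightarrow> 'a \<Rightarrow> bool) \<Rightarrow> nat \<Rightarrow> 'a \<Rightarrow> 'a set" where
  "sphere V E i x = {y \<in> V. gdist V E x y = i}"

definition nbrs :: "'a set \<Rightarrow> ('a \<Rightarrow> 'a \<Rightarrow> bool) \<Rightarrow> 'a \<Rightarrow> 'a set" where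
  "nbrs V E y = {z \<in> V. E y z}"

text \<open>Distance-regular with intersection arrays b, c (for i = 0, c 0 is forced to be 0).\<close>
definition distance_regular_with ::
  "'a set \<Rightarrow> ('a \<Rightarrow> 'a \<Rightarrow> bool) \<Rightarrow> (nat \<Rightarrow> nat) \<Rightarrow> (nat \<Rightarrow> nat) \<Rightarrow> bool" where
  "distance_regular_with V E b c \<longleftrightarrow>
     simple_graph V E \<and> connected_graph V E \<and>
     (\<forall>x\<in>V. \<forall>y\<in>V. let i = gdist V E x y in
        card (nbrs V E y \<inter> (if i = 0 then {} else sphere V E (i - 1) x)) = c i \<and>
        card (nbrs V E y \<inter> sphere V E (i + 1) x) = b i)"

definition adj_eigenvalue :: "'a set \<Rightarrow> ('a \<Rightarrow> 'a \<Rightarrow> bool) \<Rightarrow> real \<Rightarrow> bool" where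
  "adj_eigenvalue V E \<theta> \<longleftrightarrow>
     (\<exists>f :: 'a \<Rightarrow> real. (\<exists>v\<in>V. f v \<noteq> 0) \<and>
        (\<forall>x\<in>V. (\<Sum>y\<in>V. if E x y then f y else 0) = \<theta> * f x))"

end

theory Submission
  imports Defs "HOL-Analysis.Analysis"
begin

text \<open>
  All three bounds come from the Rayleigh principle for the adjacency operator A: \<theta>_D is the
  minimum of the Rayleigh quotient <f, A f> / <f, f>, and \<theta>_1 is its maximum over the functions
  of sum zero, because the eigenvalue k of a connected k-regular graph has only constant
  eigenvectors. If t is a root of t^2 = a_1 t + k, the function that is 1 at a vertex x and t/k on
  its neighbours satisfies A f = t f on the ball of radius 1 around x, so its Rayleigh quotient is t.
  For the negative root this gives \<theta>_D \<le> t, and the inequality is strict because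
  (A f)(w) = t c_2 / k \<noteq> 0 at a vertex w at distance 2 from x, so f is not an eigenvector.
  For the positive root, f is combined with a second test function supported at distance \<ge> 3
  from x (the indicator of \<Gamma>_3(x), of Rayleigh quotient a_3, or, if D \<ge> 4, the analogous function
  around a vertex at distance 4): the two are orthogonal also with respect to A, so a suitable
  combination has sum zero and Rayleigh quotient at least the smaller of the two quotients.
\<close>

hide_const (open) Elementary_Metric_Spaces.diameter Elementary_Metric_Spaces.sphere

lemma linear_coeff_zero_if_quadratic_nonpos:
  fixes a q :: real
  assumes "\<And>t. 2 * t * a + t\<^sup>2 * q \<le> 0"
  shows "a = 0"
proof -
  define s where "s = \<bar>q\<bar> + 1"
  have s: "s > 0" "2 * s + q > 0" unfolding s_def by auto
  have "2 * (a / s) * a + (a / s)\<^sup>2 * q \<le> 0" by (rule assms)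
  also have "2 * (a / s) * a + (a / s)\<^sup>2 * q = a\<^sup>2 * (2 * s + q) / s\<^sup>2"
    using s by (simp add: field_simps power2_eq_square)
  finally have "a\<^sup>2 * (2 * s + q) \<le> 0" using s by (simp add: divide_le_0_iff)
  then show ?thesis using s by (simp add: mult_le_0_iff)
qed

lemma sum_indicator_real: "finite A \<Longrightarrow> sum (indicator S) A = real (card (A \<inter> S))"
  using sum.inter_filter[of A "\<lambda>_. 1::real" "\<lambda>x. x \<in> S"] by (simp add: indicator_def of_bool_def Int_def)

lemma quadratic_root_plus:
  fixes a k :: real
  assumes "0 \<le> a\<^sup>2 + 4 * k"
  shows "((a + sqrt (a\<^sup>2 + 4 * k)) / 2)\<^sup>2 = a * ((a + sqrt (a\<^sup>2 + 4 * k)) / 2) + k"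
  using assms by (simp add: power2_eq_square field_simps)

lemma quadratic_root_minus:
  fixes a k :: real
  assumes "0 \<le> a\<^sup>2 + 4 * k"
  shows "((a - sqrt (a\<^sup>2 + 4 * k)) / 2)\<^sup>2 = a * ((a - sqrt (a\<^sup>2 + 4 * k)) / 2) + k"
  using assms by (simp add: power2_eq_square field_simps)

lemma quadratic_roots_sign:
  fixes a k :: real
  assumes "0 < k"
  shows "(a - sqrt (a\<^sup>2 + 4 * k)) / 2 < 0" and "0 < (a + sqrt (a\<^sup>2 + 4 * k)) / 2"
proof -
  have "\<bar>a\<bar> < sqrt (a\<^sup>2 + 4 * k)"
    using assms real_sqrt_less_mono[of "a\<^sup>2" "a\<^sup>2 + 4 * k"] by simp
  then show "(a - sqrt (a\<^sup>2 + 4 * k)) / 2 < 0" "0 < (a + sqrt (a\<^sup>2 + 4 * k)) / 2"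
    by (simp_all add: abs_less_iff)
qed

section \<open>Rayleigh quotients of a symmetric adjacency operator\<close>

locale symmetric_adjacency =
  fixes V :: "'a set" and E :: "'a \<Rightarrow> 'a \<Rightarrow> bool"
  assumes finite_V: "finite V" and E_sym: "E x y \<Longrightarrow> E y x"
begin

definition adj :: "('a \<Rightarrow> real) \<Rightarrow> 'a \<Rightarrow> real" where
  "adj f x = (\<Sum>y\<in>V. if E x y then f y else 0)"

definition inprod :: "('a \<Rightarrow> real) \<Rightarrow> ('a \<Rightarrow> real) \<Rightarrow> real" where
  "inprod f g = (\<Sum>v\<in>V. f v * g v)"

lemma adj_eq_sum_nbrs: "adj f x = sum f (nbrs V E x)"
  unfolding adj_def nbrs_def using sum.inter_filter[OF finite_V, of f "E x"] by simp

lemma nbrs_subset: "nbrs V E v \<subseteq> V"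
  unfolding nbrs_def by auto

lemma finite_nbrs: "finite (nbrs V E v)"
  using finite_V nbrs_subset by (rule rev_finite_subset)

lemma adj_indicator: "adj (indicator S) v = real (card (nbrs V E v \<inter> S))"
  unfolding adj_eq_sum_nbrs using finite_nbrs by (rule sum_indicator_real)

lemma adj_eigenvalue_iff:
  "adj_eigenvalue V E \<mu> \<longleftrightarrow> (\<exists>f. (\<exists>v\<in>V. f v \<noteq> 0) \<and> (\<forall>v\<in>V. adj f v = \<mu> * f v))"
  unfolding adj_eigenvalue_def adj_def ..

lemma adj_lincomb: "adj (\<lambda>v. \<alpha> * f v + \<beta> * g v) x = \<alpha> * adj f x + \<beta> * adj g x"
  unfolding adj_def sum_distrib_left sum.distrib[symmetric] by (intro sum.cong refl) auto

lemma inprod_commute: "inprod f g = inprod g f"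
  unfolding inprod_def by (simp add: mult.commute)

lemma inprod_adj_commute: "inprod f (adj g) = inprod (adj f) g"
proof -
  have "inprod f (adj g) = (\<Sum>v\<in>V. \<Sum>y\<in>V. if E v y then f v * g y else 0)"
    unfolding inprod_def adj_def sum_distrib_left by (intro sum.cong refl) auto
  also have "\<dots> = (\<Sum>y\<in>V. \<Sum>v\<in>V. if E y v then f v * g y else 0)"
    by (subst sum.swap) (intro sum.cong refl, metis E_sym)
  also have "\<dots> = inprod (adj f) g"
    unfolding inprod_def adj_def sum_distrib_right by (intro sum.cong refl) auto
  finally show ?thesis .
qed

lemma inprod_nonneg: "inprod f f \<ge> 0"
  unfolding inprod_def by (simp add: sum_nonneg)

lemma inprod_self_eq_0_iff: "inprod f f = 0 \<longleftrightarrow> (\<forall>v\<in>V. f v = 0)"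
  unfolding inprod_def using finite_V by (simp add: sum_nonneg_eq_0_iff)

lemma inprod_self_pos_iff: "inprod f f > 0 \<longleftrightarrow> (\<exists>v\<in>V. f v \<noteq> 0)"
  using inprod_nonneg[of f] inprod_self_eq_0_iff[of f] by fastforce

lemma inprod_lincomb:
  "inprod (\<lambda>v. \<alpha> * f v + \<beta> * g v) (\<lambda>v. \<alpha> * f v + \<beta> * g v)
     = \<alpha>\<^sup>2 * inprod f f + 2 * \<alpha> * \<beta> * inprod f g + \<beta>\<^sup>2 * inprod g g"
  unfolding inprod_def
  by (simp add: sum.distrib sum_distrib_left algebra_simps power2_eq_square)

lemma inprod_adj_lincomb:
  "inprod (\<lambda>v. \<alpha> * f v + \<beta> * g v) (adj (\<lambda>v. \<alpha> * f v + \<beta> * g v))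
     = \<alpha>\<^sup>2 * inprod f (adj f) + 2 * \<alpha> * \<beta> * inprod f (adj g) + \<beta>\<^sup>2 * inprod g (adj g)"
proof -
  have "inprod (\<lambda>v. \<alpha> * f v + \<beta> * g v) (adj (\<lambda>v. \<alpha> * f v + \<beta> * g v))
     = \<alpha>\<^sup>2 * inprod f (adj f) + \<alpha> * \<beta> * (inprod f (adj g) + inprod g (adj f))
       + \<beta>\<^sup>2 * inprod g (adj g)"
    unfolding adj_lincomb unfolding inprod_def
    by (simp add: sum.distrib sum_distrib_left algebra_simps power2_eq_square)
  moreover have "inprod g (adj f) = inprod f (adj g)"
    by (metis inprod_adj_commute inprod_commute)
  ultimately show ?thesis by simp
qed

lemma inprod_eq_0_if_disjoint_support:
  assumes "\<And>v. v \<in> V \<Longrightarrow> f v \<noteq> 0 \<Longrightarrow> g v = 0"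
  shows "inprod f g = 0"
  unfolding inprod_def using assms by (intro sum.neutral) auto

lemma inprod_adj_if_eigen_on_support:
  assumes "\<And>v. v \<in> V \<Longrightarrow> f v \<noteq> 0 \<Longrightarrow> adj f v = t * f v"
  shows "inprod f (adj f) = t * inprod f f"
proof -
  have "inprod f (adj f) = (\<Sum>v\<in>V. t * (f v * f v))"
    unfolding inprod_def using assms by (intro sum.cong refl) (metis mult.left_commute mult_zero_left)
  then show ?thesis unfolding inprod_def by (simp add: sum_distrib_left)
qed

lemma inprod_adj_eigenvector:
  assumes "\<forall>v\<in>V. adj u v = \<kappa> * u v"
  shows "inprod u (adj f) = \<kappa> * inprod u f"
proof -
  have "inprod u (adj f) = inprod (adj u) f" by (rule inprod_adj_commute)
  also have "\<dots> = (\<Sum>v\<in>V. \<kappa> * (u v * f v))"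
    unfolding inprod_def using assms by (intro sum.cong) auto
  finally show ?thesis by (simp add: inprod_def sum_distrib_left)
qed

text \<open>
  In the following lemmas \<sigma> = 1 selects the maximum and \<sigma> = -1 the minimum of the Rayleigh
  quotient on the orthogonal complement of an eigenvector u; u = 0 imposes no constraint.
\<close>

lemma rayleigh_maximizer_is_eigenvector:
  assumes \<sigma>: "\<sigma> \<noteq> 0"
    and u: "\<forall>v\<in>V. adj u v = \<kappa> * u v"
    and maximal: "\<And>h. inprod u h = 0 \<Longrightarrow> \<sigma> * inprod h (adj h) \<le> \<sigma> * \<mu> * inprod h h"
    and f: "inprod u f = 0" "inprod f (adj f) = \<mu> * inprod f f"
  shows "\<forall>v\<in>V. adj f v = \<mu> * f v"
proof -
  define g where "g v = adj f v - \<mu> * f v" for v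
  have "inprod u g = inprod u (adj f) - \<mu> * inprod u f"
    unfolding g_def inprod_def by (simp add: sum_subtractf sum_distrib_left algebra_simps)
  then have g_perp: "inprod u g = 0"
    using f(1) inprod_adj_eigenvector[OF u, of f] by simp
  have f_adj_g: "inprod f (adj g) - \<mu> * inprod f g = inprod g g"
    unfolding inprod_adj_commute[of f] unfolding inprod_def g_def
    by (simp add: sum_subtractf[symmetric] sum_distrib_left algebra_simps)
  \<comment> \<open>maximality along the line f + t g forces the first variation 2 \<sigma> <g, g> to vanish\<close>
  have "2 * t * (\<sigma> * inprod g g) + t\<^sup>2 * (\<sigma> * (inprod g (adj g) - \<mu> * inprod g g)) \<le> 0" for t
  proof -
    have "inprod u (\<lambda>v. 1 * f v + t * g v) = inprod u f + t * inprod u g"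
      unfolding inprod_def by (simp add: sum.distrib sum_distrib_left algebra_simps)
    then have "inprod u (\<lambda>v. 1 * f v + t * g v) = 0" using f(1) g_perp by simp
    from maximal[OF this] show ?thesis
      unfolding inprod_lincomb inprod_adj_lincomb f(2) f_adj_g[symmetric]
      by (simp add: algebra_simps)
  qed
  then have "\<sigma> * inprod g g = 0" by (rule linear_coeff_zero_if_quadratic_nonpos)
  then have "\<forall>v\<in>V. g v = 0" using \<sigma> inprod_self_eq_0_iff by simp
  then show ?thesis unfolding g_def by simp
qed

lemma inprod_restrict_scale:
  fixes c :: real and h :: "'a \<Rightarrow> real"
  defines "h' \<equiv> \<lambda>v. if v \<in> V then c * h v else 0"
  shows "inprod u h' = c * inprod u h"
    and "inprod h' h' = c\<^sup>2 * inprod h h"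
    and "inprod h' (adj h') = c\<^sup>2 * inprod h (adj h)"
proof -
  have adj_h': "adj h' x = c * adj h x" for x
    unfolding adj_def h'_def sum_distrib_left by (intro sum.cong refl) auto
  show "inprod u h' = c * inprod u h" "inprod h' h' = c\<^sup>2 * inprod h h"
    "inprod h' (adj h') = c\<^sup>2 * inprod h (adj h)"
    unfolding inprod_def adj_h' unfolding h'_def sum_distrib_left
    by (auto intro!: sum.cong simp: power2_eq_square)
qed

lemma rayleigh_max_attained:
  assumes "\<exists>v\<in>V. f\<^sub>0 v \<noteq> 0" "inprod u f\<^sub>0 = 0"
  defines "K \<equiv> {h. (\<forall>v. v \<notin> V \<longrightarrow> h v = 0) \<and> inprod h h = 1 \<and> inprod u h = 0}"
  shows "\<exists>f\<in>K. \<forall>h\<in>K. \<sigma> * inprod h (adj h) \<le> \<sigma> * inprod f (adj f)"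
proof (rule continuous_attains_sup)
  \<comment> \<open>vanishing outside V makes K a closed subset of a compact box in the product topology\<close>
  define S where "S v = (if v \<in> V then {-1..1::real} else {0})" for v
  have "K = PiE UNIV S \<inter> {h. inprod h h = 1} \<inter> {h. inprod u h = 0}"
  proof (intro equalityI subsetI)
    fix h assume h: "h \<in> K"
    have "\<bar>h v\<bar> \<le> 1" if "v \<in> V" for v
    proof -
      have "(h v)\<^sup>2 \<le> inprod h h"
        unfolding inprod_def power2_eq_square using finite_V that by (intro member_le_sum) auto
      then show ?thesis using h unfolding K_def by (simp add: abs_square_le_1[symmetric])
    qed
    then show "h \<in> PiE UNIV S \<inter> {h. inprod h h = 1} \<inter> {h. inprod u h = 0}"
      using h unfolding K_def S_def by (auto simp: abs_le_iff)
  qed (auto simp: K_def S_def PiE_iff split: if_splits)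
  moreover have "compact (PiE UNIV S)"
    using compactin_PiE[of "\<lambda>_. euclidean" UNIV S] by (simp add: S_def euclidean_product_topology)
  moreover have "closed {h. inprod h h = 1}" "closed {h. inprod u h = 0}"
    unfolding inprod_def
    by (intro closed_Collect_eq continuous_intros continuous_on_product_coordinates)+
  ultimately show "compact K" by (simp add: closed_Int compact_Int_closed)
  have "continuous_on UNIV (\<lambda>h. \<sigma> * inprod h (adj h))"
    unfolding inprod_def adj_eq_sum_nbrs
    by (intro continuous_intros continuous_on_product_coordinates)
  then show "continuous_on K (\<lambda>h. \<sigma> * inprod h (adj h))"
    using continuous_on_subset by blast
  define c where "c = 1 / sqrt (inprod f\<^sub>0 f\<^sub>0)"
  have "inprod f\<^sub>0 f\<^sub>0 > 0" using assms(1) inprod_self_pos_iff by blast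
  then have "c\<^sup>2 * inprod f\<^sub>0 f\<^sub>0 = 1" unfolding c_def by (simp add: power_divide)
  then have "(\<lambda>v. if v \<in> V then c * f\<^sub>0 v else 0) \<in> K"
    using assms(2) inprod_restrict_scale(1,2)[where c=c and h=f\<^sub>0] unfolding K_def by simp
  then show "K \<noteq> {}" by blast
qed

lemma rayleigh_extremal_eigenvector:
  assumes \<sigma>: "\<sigma> \<noteq> 0" and u: "\<forall>v\<in>V. adj u v = \<kappa> * u v"
    and f\<^sub>0: "\<exists>v\<in>V. f\<^sub>0 v \<noteq> 0" "inprod u f\<^sub>0 = 0"
  obtains \<mu> f where "\<exists>v\<in>V. f v \<noteq> 0" "inprod u f = 0" "\<forall>v\<in>V. adj f v = \<mu> * f v"
    and "\<And>h. inprod u h = 0 \<Longrightarrow> \<sigma> * inprod h (adj h) \<le> \<sigma> * \<mu> * inprod h h"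
proof -
  obtain f where f: "inprod f f = 1" "inprod u f = 0"
    and max: "\<And>h. (\<forall>v. v \<notin> V \<longrightarrow> h v = 0) \<Longrightarrow> inprod h h = 1 \<Longrightarrow> inprod u h = 0
                \<Longrightarrow> \<sigma> * inprod h (adj h) \<le> \<sigma> * inprod f (adj f)"
    using rayleigh_max_attained[OF f\<^sub>0, of \<sigma>] by blast
  define \<mu> where "\<mu> = inprod f (adj f)"
  have bound: "\<sigma> * inprod h (adj h) \<le> \<sigma> * \<mu> * inprod h h" if h: "inprod u h = 0" for h
  proof (cases "inprod h h = 0")
    case True
    then have "inprod h (adj h) = 0" unfolding inprod_self_eq_0_iff by (simp add: inprod_def)
    then show ?thesis using True by simp
  next
    case False
    then have pos: "inprod h h > 0" using inprod_nonneg[of h] by simp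
    define c where "c = 1 / sqrt (inprod h h)"
    have c2: "c\<^sup>2 * inprod h h = 1" using pos unfolding c_def by (simp add: power_divide)
    have "\<sigma> * (c\<^sup>2 * inprod h (adj h)) \<le> \<sigma> * \<mu>"
      using max[of "\<lambda>v. if v \<in> V then c * h v else 0"] inprod_restrict_scale[where c=c and h=h] h c2
      unfolding \<mu>_def by simp
    then have "\<sigma> * (c\<^sup>2 * inprod h (adj h)) * inprod h h \<le> \<sigma> * \<mu> * inprod h h"
      using pos by (simp add: mult_right_mono)
    moreover have "\<sigma> * (c\<^sup>2 * inprod h (adj h)) * inprod h h = \<sigma> * inprod h (adj h)"
      using c2 by (metis mult.assoc mult.commute mult_1_right)
    ultimately show ?thesis by simp
  qed
  have "\<forall>v\<in>V. adj f v = \<mu> * f v"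
    using rayleigh_maximizer_is_eigenvector[OF \<sigma> u bound f(2)] f(1) unfolding \<mu>_def by simp
  moreover have "\<exists>v\<in>V. f v \<noteq> 0" using f(1) inprod_self_pos_iff[of f] by simp
  ultimately show ?thesis using that f(2) bound by blast
qed

lemma eigenvalue_index:
  assumes "{t. adj_eigenvalue V E t} = \<theta> ` {0..D}"
    and "\<exists>v\<in>V. f v \<noteq> 0" "\<forall>v\<in>V. adj f v = \<mu> * f v"
  obtains j where "j \<le> D" "\<mu> = \<theta> j"
  using assms adj_eigenvalue_iff by (metis atLeastAtMost_iff image_iff mem_Collect_eq)

lemma least_eigenvalue_lt_rayleigh:
  fixes \<theta> :: "nat \<Rightarrow> real"
  assumes eig: "{t. adj_eigenvalue V E t} = \<theta> ` {0..D}"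
    and dec: "\<And>i j. i < j \<Longrightarrow> j \<le> D \<Longrightarrow> \<theta> j < \<theta> i"
    and g: "\<exists>v\<in>V. g v \<noteq> 0" "inprod g (adj g) = s * inprod g g"
    and not_eigen: "\<exists>w\<in>V. adj g w \<noteq> s * g w"
  shows "\<theta> D < s"
proof (rule ccontr)
  assume "\<not> \<theta> D < s"
  have zero_perp: "inprod (\<lambda>_. 0) h = 0" for h by (simp add: inprod_def)
  have zero_eigen: "\<forall>v\<in>V. adj (\<lambda>_. 0) v = 0 * 0" by (simp add: adj_def)
  obtain \<mu> f where f: "\<exists>v\<in>V. f v \<noteq> 0" "\<forall>v\<in>V. adj f v = \<mu> * f v"
    and min: "\<And>h. inprod (\<lambda>_. 0) h = 0 \<Longrightarrow> -1 * inprod h (adj h) \<le> -1 * \<mu> * inprod h h"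
    by (rule rayleigh_extremal_eigenvector[of "-1" "\<lambda>_. 0" 0 g]) (use zero_eigen zero_perp g(1) in auto)
  obtain j where "j \<le> D" "\<mu> = \<theta> j" using eigenvalue_index[OF eig f] .
  then have "\<theta> D \<le> \<mu>" using dec[of j D] by (cases "j = D") auto
  moreover have "\<mu> * inprod g g \<le> s * inprod g g" using min[of g] zero_perp[of g] g(2) by simp
  then have "\<mu> \<le> s" using g(1) inprod_self_pos_iff[of g] by simp
  ultimately have "\<mu> = s" using \<open>\<not> \<theta> D < s\<close> by simp
  then have "\<forall>v\<in>V. adj g v = s * g v"
    using rayleigh_maximizer_is_eigenvector[of "-1" "\<lambda>_. 0" 0 s g] zero_perp zero_eigen min g(2)
    by simp
  then show False using not_eigen by blast
qed

lemma exists_sum_zero_combination: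
  assumes g: "inprod g (adj g) \<ge> m * inprod g g" and h: "inprod h (adj h) \<ge> m * inprod h h"
    and orth: "inprod g h = 0" "inprod g (adj h) = 0"
    and "sum h V \<noteq> 0" "v\<^sub>0 \<in> V" "g v\<^sub>0 \<noteq> 0" "h v\<^sub>0 = 0"
  obtains p where "\<exists>v\<in>V. p v \<noteq> 0" "sum p V = 0" "inprod p (adj p) \<ge> m * inprod p p"
proof
  define \<alpha> \<beta> where "\<alpha> = sum h V" and "\<beta> = - sum g V"
  let ?p = "\<lambda>v. \<alpha> * g v + \<beta> * h v"
  show "\<exists>v\<in>V. ?p v \<noteq> 0" using assms(5-) unfolding \<alpha>_def by (intro bexI[of _ v\<^sub>0]) auto
  have "sum ?p V = \<alpha> * sum g V + \<beta> * sum h V" by (simp add: sum.distrib sum_distrib_left)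
  then show "sum ?p V = 0" unfolding \<alpha>_def \<beta>_def by simp
  have "\<alpha>\<^sup>2 * (m * inprod g g) + \<beta>\<^sup>2 * (m * inprod h h)
          \<le> \<alpha>\<^sup>2 * inprod g (adj g) + \<beta>\<^sup>2 * inprod h (adj h)"
    using g h by (intro add_mono mult_left_mono) auto
  then show "inprod ?p (adj ?p) \<ge> m * inprod ?p ?p"
    unfolding inprod_lincomb inprod_adj_lincomb orth by (simp add: algebra_simps)
qed

end

section \<open>Connected simple graphs\<close>

locale connected_simple_graph =
  fixes V :: "'a set" and E :: "'a \<Rightarrow> 'a \<Rightarrow> bool"
  assumes simple: "simple_graph V E" and connected: "connected_graph V E"
begin

lemma finite_V: "finite V" and V_nonempty: "V \<noteq> {}" and edge_in_V: "E x y \<Longrightarrow> x \<in> V \<and> y \<in> V"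
  and E_sym: "E x y \<Longrightarrow> E y x" and E_irrefl: "\<not> E x x"
  using simple unfolding simple_graph_def by blast+

sublocale symmetric_adjacency V E
  using finite_V E_sym by unfold_locales

lemma walk_Suc_snoc: "walk V E (Suc n) x y \<longleftrightarrow> (\<exists>z\<in>V. walk V E n x z \<and> E z y)"
proof (induction n arbitrary: x)
  case 0
  then show ?case using edge_in_V by auto
next
  case (Suc n)
  have "walk V E (Suc (Suc n)) x y \<longleftrightarrow> (\<exists>w\<in>V. E x w \<and> (\<exists>z\<in>V. walk V E n w z \<and> E z y))"
    using Suc by simp
  also have "\<dots> \<longleftrightarrow> (\<exists>z\<in>V. walk V E (Suc n) x z \<and> E z y)" by auto
  finally show ?case .
qed

lemma walk_append: "walk V E m x y \<Longrightarrow> walk V E n y z \<Longrightarrow> walk V E (m + n) x z"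
  by (induction m arbitrary: x) auto

lemma walk_reverse: "walk V E n x y \<Longrightarrow> walk V E n y x"
proof (induction n arbitrary: x)
  case (Suc n)
  then obtain z where "z \<in> V" "E x z" "walk V E n y z" by auto
  then show ?case using walk_Suc_snoc edge_in_V E_sym by meson
qed auto

lemma gdist_walk: "x \<in> V \<Longrightarrow> y \<in> V \<Longrightarrow> walk V E (gdist V E x y) x y"
  using connected unfolding connected_graph_def gdist_def by (meson LeastI_ex)

lemma gdist_le: "walk V E n x y \<Longrightarrow> gdist V E x y \<le> n"
  unfolding gdist_def by (rule Least_le)

lemma gdist_commute: "x \<in> V \<Longrightarrow> y \<in> V \<Longrightarrow> gdist V E x y = gdist V E y x"
  by (meson antisym gdist_le gdist_walk walk_reverse)

lemma gdist_triangle: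
  "x \<in> V \<Longrightarrow> y \<in> V \<Longrightarrow> z \<in> V \<Longrightarrow> gdist V E x z \<le> gdist V E x y + gdist V E y z"
  by (meson gdist_le gdist_walk walk_append)

lemma gdist_eq_0_iff: "x \<in> V \<Longrightarrow> y \<in> V \<Longrightarrow> gdist V E x y = 0 \<longleftrightarrow> x = y"
  using gdist_walk[of x y] gdist_le[of 0 x y] by auto

lemma gdist_edge:
  assumes "E x y"
  shows "gdist V E x y = 1"
proof -
  have "gdist V E x y \<le> 1" using assms edge_in_V by (intro gdist_le[of 1]) auto
  moreover have "gdist V E x y \<noteq> 0" using assms edge_in_V E_irrefl gdist_eq_0_iff by metis
  ultimately show ?thesis by simp
qed

lemma gdist_edge_le:
  assumes "x \<in> V" "E v z"
  shows "gdist V E x z \<le> gdist V E x v + 1"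
  using gdist_triangle[of x v z] gdist_edge[OF assms(2)] edge_in_V[OF assms(2)] assms(1) by simp

lemma gdist_edge_ge:
  assumes "x \<in> V" "E v z"
  shows "gdist V E x v \<le> gdist V E x z + 1"
  using gdist_edge_le[OF assms(1) E_sym[OF assms(2)]] .

lemma gdist_Suc_predecessor:
  assumes "x \<in> V" "y \<in> V" "gdist V E x y = Suc m"
  obtains z where "z \<in> V" "E z y" "gdist V E x z = m"
proof -
  obtain z where z: "z \<in> V" "walk V E m x z" "E z y"
    using gdist_walk[OF assms(1,2)] assms(3) walk_Suc_snoc by auto
  then have "gdist V E x z = m"
    using gdist_le[OF z(2)] gdist_edge_le[OF assms(1) z(3)] assms(3) by simp
  then show ?thesis using that z by blast
qed

lemma gdist_intermediate:
  assumes "x \<in> V" "y \<in> V" "j \<le> gdist V E x y"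
  obtains z where "z \<in> V" "gdist V E x z = j"
  using assms(2,3)
proof (induction "gdist V E x y" arbitrary: y)
  case 0
  then show ?case by auto
next
  case (Suc m)
  show ?case
  proof (cases "j = Suc m")
    case False
    obtain z where "z \<in> V" "E z y" "gdist V E x z = m"
      using gdist_Suc_predecessor[OF assms(1) Suc.prems(2)] Suc.hyps(2) by metis
    then show ?thesis using Suc False by auto
  qed (use Suc in auto)
qed

lemma diameter_attained: obtains x y where "x \<in> V" "y \<in> V" "gdist V E x y = diameter V E"
proof -
  let ?S = "{gdist V E x y | x y. x \<in> V \<and> y \<in> V}"
  have "?S = (\<lambda>(x,y). gdist V E x y) ` (V \<times> V)" by auto
  then have "finite ?S" using finite_V by simp
  moreover have "?S \<noteq> {}" using V_nonempty by auto
  ultimately have "Max ?S \<in> ?S" by (rule Max_in)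
  then show ?thesis using that unfolding Defs.diameter_def by force
qed

lemma exists_gdist_eq:
  assumes "j \<le> diameter V E"
  obtains x y where "x \<in> V" "y \<in> V" "gdist V E x y = j"
proof -
  obtain x y where xy: "x \<in> V" "y \<in> V" "gdist V E x y = diameter V E" by (rule diameter_attained)
  then have "j \<le> gdist V E x y" using assms by simp
  then obtain z where "z \<in> V" "gdist V E x z = j" by (rule gdist_intermediate[OF xy(1,2)])
  then show ?thesis using that xy(1) by blast
qed

lemma sphere_0: "x \<in> V \<Longrightarrow> sphere V E 0 x = {x}"
  unfolding Defs.sphere_def using gdist_eq_0_iff by auto

lemma sphere_1:
  assumes "x \<in> V"
  shows "sphere V E 1 x = nbrs V E x"
proof (intro equalityI subsetI)
  fix y assume "y \<in> sphere V E 1 x"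
  then have "walk V E 1 x y" using gdist_walk[OF assms] unfolding Defs.sphere_def by fastforce
  then show "y \<in> nbrs V E x" unfolding nbrs_def by auto
qed (auto simp: nbrs_def Defs.sphere_def gdist_edge)

lemma nbrs_inter_sphere_far:
  assumes "x \<in> V" "gdist V E x v + 2 \<le> i \<or> i + 2 \<le> gdist V E x v"
  shows "nbrs V E v \<inter> sphere V E i x = {}"
  using gdist_edge_le[OF assms(1), of v] gdist_edge_ge[OF assms(1), of v] assms(2)
  unfolding nbrs_def Defs.sphere_def by fastforce

lemma adj_const_regular:
  assumes "\<forall>v\<in>V. card (nbrs V E v) = k"
  shows "\<forall>v\<in>V. adj (\<lambda>_. 1) v = real k * 1"
  using assms unfolding adj_eq_sum_nbrs by simp

lemma regular_eigenvector_const: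
  assumes regular: "\<forall>v\<in>V. card (nbrs V E v) = k"
    and f: "\<forall>v\<in>V. adj f v = real k * f v"
  obtains c where "\<forall>v\<in>V. f v = c"
proof -
  define M where "M = Max (f ` V)"
  have fin: "finite (f ` V)" using finite_V by simp
  have "M \<in> f ` V" unfolding M_def using fin V_nonempty by (intro Max_in) auto
  then obtain v\<^sub>0 where v\<^sub>0: "v\<^sub>0 \<in> V" "f v\<^sub>0 = M" by auto
  have le_M: "f y \<le> M" if "y \<in> V" for y unfolding M_def using fin that by simp
  have max_spreads: "f y = M" if w: "w \<in> V" "f w = M" "E w y" for w y
  proof -
    \<comment> \<open>f w is the average of f over the neighbours of w, all of which are at most M\<close>
    have "sum (\<lambda>u. M - f u) (nbrs V E w) = 0"
      using f w regular unfolding adj_eq_sum_nbrs by (simp add: sum_subtractf)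
    moreover have "\<forall>u\<in>nbrs V E w. M - f u \<ge> 0" using le_M nbrs_subset by auto
    ultimately have "\<forall>u\<in>nbrs V E w. M - f u = 0" by (simp add: sum_nonneg_eq_0_iff finite_nbrs)
    moreover have "y \<in> nbrs V E w" using w edge_in_V unfolding nbrs_def by auto
    ultimately show ?thesis by simp
  qed
  have "f v = M" if "walk V E n v\<^sub>0 v" for n v
    using that
  proof (induction n arbitrary: v)
    case (Suc n)
    then obtain w where "w \<in> V" "walk V E n v\<^sub>0 w" "E w v" using walk_Suc_snoc by blast
    then show ?case using Suc max_spreads by blast
  qed (use v\<^sub>0 in simp)
  then show ?thesis using that connected v\<^sub>0(1) unfolding connected_graph_def by blast
qed

lemma second_eigenvalue_ge:
  fixes \<theta> :: "nat \<Rightarrow> real"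
  assumes regular: "\<forall>v\<in>V. card (nbrs V E v) = k"
    and eig: "{t. adj_eigenvalue V E t} = \<theta> ` {0..D}"
    and dec: "\<And>i j. i < j \<Longrightarrow> j \<le> D \<Longrightarrow> \<theta> j < \<theta> i"
    and \<theta>0: "\<theta> 0 = real k" and "1 \<le> D"
    and p: "\<exists>v\<in>V. p v \<noteq> 0" "sum p V = 0" "m * inprod p p \<le> inprod p (adj p)"
  shows "m \<le> \<theta> 1"
proof -
  have one_perp_iff: "inprod (\<lambda>_. 1) h = 0 \<longleftrightarrow> sum h V = 0" for h by (simp add: inprod_def)
  obtain \<mu> f where f: "\<exists>v\<in>V. f v \<noteq> 0" "inprod (\<lambda>_. 1) f = 0" "\<forall>v\<in>V. adj f v = \<mu> * f v"
    and max: "\<And>h. inprod (\<lambda>_. 1) h = 0 \<Longrightarrow> 1 * inprod h (adj h) \<le> 1 * \<mu> * inprod h h"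
    using rayleigh_extremal_eigenvector[OF one_neq_zero adj_const_regular[OF regular] p(1)] p(2)
    unfolding one_perp_iff by metis
  have "m * inprod p p \<le> \<mu> * inprod p p" using max[of p] p(2,3) one_perp_iff by simp
  then have "m \<le> \<mu>" using p(1) inprod_self_pos_iff[of p] by simp
  obtain j where j: "j \<le> D" "\<mu> = \<theta> j" using eigenvalue_index[OF eig f(1,3)] .
  have "j \<noteq> 0"
  proof
    assume "j = 0"
    then obtain c where "\<forall>v\<in>V. f v = c"
      using regular_eigenvector_const[OF regular] f(3) j \<theta>0 by auto
    then show False using f(1,2) one_perp_iff finite_V by auto
  qed
  then have "\<theta> j \<le> \<theta> 1" using dec[of 1 j] j by (cases "j = 1") auto
  then show ?thesis using \<open>m \<le> \<mu>\<close> j by simp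
qed

end

section \<open>Distance-regular graphs and their test vectors\<close>

locale distance_regular_graph =
  fixes V :: "'a set" and E :: "'a \<Rightarrow> 'a \<Rightarrow> bool" and b c :: "nat \<Rightarrow> nat"
  assumes distance_regular: "distance_regular_with V E b c"
begin

sublocale connected_simple_graph V E
  using distance_regular unfolding distance_regular_with_def by unfold_locales blast+

definition k :: nat where "k = b 0"

definition a :: "nat \<Rightarrow> real" where "a i = real k - real (b i) - real (c i)"

lemma intersection_numbers:
  assumes "x \<in> V" "v \<in> V" "gdist V E x v = i"
  shows "card (nbrs V E v \<inter> (if i = 0 then {} else sphere V E (i - 1) x)) = c i"
    and "card (nbrs V E v \<inter> sphere V E (i + 1) x) = b i"
  using distance_regular assms unfolding distance_regular_with_def Let_def by metis+

lemma card_nbrs_inter_sphere_Suc: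
  "x \<in> V \<Longrightarrow> v \<in> V \<Longrightarrow> gdist V E x v = i \<Longrightarrow> card (nbrs V E v \<inter> sphere V E (i + 1) x) = b i"
  by (rule intersection_numbers(2))

lemma card_nbrs_inter_sphere_pred:
  "x \<in> V \<Longrightarrow> v \<in> V \<Longrightarrow> gdist V E x v = i \<Longrightarrow> 0 < i \<Longrightarrow>
    card (nbrs V E v \<inter> sphere V E (i - 1) x) = c i"
  using intersection_numbers(1)[of x v i] by simp

lemma card_nbrs: "v \<in> V \<Longrightarrow> card (nbrs V E v) = k"
  using card_nbrs_inter_sphere_Suc[of v v 0] sphere_1[of v] gdist_eq_0_iff[of v v]
  unfolding k_def by simp

lemma card_nbrs_inter_sphere_same:
  assumes x: "x \<in> V" and v: "v \<in> V" and i: "gdist V E x v = i"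
  shows "real (card (nbrs V E v \<inter> sphere V E i x)) = a i"
proof -
  define C where "C = nbrs V E v \<inter> (if i = 0 then {} else sphere V E (i - 1) x)"
  define A where "A = nbrs V E v \<inter> sphere V E i x"
  define B where "B = nbrs V E v \<inter> sphere V E (i + 1) x"
  have "nbrs V E v = C \<union> A \<union> B"
  proof (intro equalityI subsetI)
    fix z assume z: "z \<in> nbrs V E v"
    then have "gdist V E x z \<le> i + 1" "i \<le> gdist V E x z + 1"
      using gdist_edge_le[OF x] gdist_edge_ge[OF x] i unfolding nbrs_def by auto
    then consider "gdist V E x z = i + 1" | "gdist V E x z = i" | "0 < i" "gdist V E x z = i - 1"
      by linarith
    then show "z \<in> C \<union> A \<union> B"
      using z nbrs_subset unfolding A_def B_def C_def Defs.sphere_def by cases auto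
  qed (auto simp: A_def B_def C_def)
  moreover have "C \<inter> A = {}" "C \<inter> B = {}" "A \<inter> B = {}"
    unfolding A_def B_def C_def Defs.sphere_def by auto
  moreover have "finite C" "finite A" "finite B"
    unfolding A_def B_def C_def using finite_nbrs by auto
  ultimately have "card (nbrs V E v) = card C + card A + card B"
    by (simp add: card_Un_disjoint Int_Un_distrib2)
  moreover have "card C = c i" using intersection_numbers(1)[OF x v i] unfolding C_def .
  moreover have "card B = b i" using card_nbrs_inter_sphere_Suc[OF x v i] unfolding B_def .
  ultimately show ?thesis using card_nbrs[OF v] unfolding A_def a_def by simp
qed

lemma c_2_pos:
  assumes x: "x \<in> V" and v: "v \<in> V" "gdist V E x v = 2"
  shows "0 < c 2"
proof -
  obtain z where "z \<in> V" "E z v" "gdist V E x z = 1"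
    using gdist_Suc_predecessor[OF x v(1)] v(2) by (metis numeral_2_eq_2 One_nat_def)
  then have "z \<in> nbrs V E v \<inter> sphere V E 1 x"
    unfolding nbrs_def Defs.sphere_def by (auto intro: E_sym)
  then have "card (nbrs V E v \<inter> sphere V E 1 x) \<noteq> 0" using finite_nbrs by auto
  then show ?thesis using card_nbrs_inter_sphere_pred[OF x v] by simp
qed

definition ball_vector :: "'a \<Rightarrow> real \<Rightarrow> 'a \<Rightarrow> real" where
  "ball_vector x t y = indicator (sphere V E 0 x) y + t / k * indicator (sphere V E 1 x) y"

lemma ball_vector_center: "x \<in> V \<Longrightarrow> ball_vector x t x = 1"
  unfolding ball_vector_def Defs.sphere_def using gdist_eq_0_iff[of x x] by (simp add: indicator_def)

lemma ball_vector_dist_1: "v \<in> V \<Longrightarrow> gdist V E x v = 1 \<Longrightarrow> ball_vector x t v = t / k"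
  unfolding ball_vector_def Defs.sphere_def by simp

lemma ball_vector_eq_0: "2 \<le> gdist V E x v \<Longrightarrow> ball_vector x t v = 0"
  unfolding ball_vector_def Defs.sphere_def by simp

lemma ball_vector_support: "v \<in> V \<Longrightarrow> ball_vector x t v \<noteq> 0 \<Longrightarrow> gdist V E x v \<le> 1"
  unfolding ball_vector_def Defs.sphere_def by (auto split: split_indicator_asm)

lemma adj_ball_vector:
  "adj (ball_vector x t) v = real (card (nbrs V E v \<inter> sphere V E 0 x))
     + t / k * real (card (nbrs V E v \<inter> sphere V E 1 x))"
  using adj_lincomb[of 1 "indicator (sphere V E 0 x)" "t / k" "indicator (sphere V E 1 x)" v]
  unfolding ball_vector_def[abs_def] adj_indicator by simp

lemma adj_ball_vector_eigen:
  assumes x: "x \<in> V" and v: "v \<in> V" "gdist V E x v \<le> 1"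
    and k: "0 < k" and t: "t\<^sup>2 = a 1 * t + k"
  shows "adj (ball_vector x t) v = t * ball_vector x t v"
proof (cases "v = x")
  case True
  have "nbrs V E x \<inter> sphere V E 0 x = {}" using sphere_0[OF x] E_irrefl unfolding nbrs_def by auto
  moreover have "nbrs V E x \<inter> sphere V E 1 x = nbrs V E x" using sphere_1[OF x] by simp
  ultimately show ?thesis
    using True k card_nbrs[OF x] ball_vector_center[OF x] unfolding adj_ball_vector by simp
next
  case False
  then have v1: "gdist V E x v = 1" using v gdist_eq_0_iff[OF x v(1)] by simp
  have "x \<in> nbrs V E v" using v1 sphere_1[OF x] x v(1) E_sym unfolding Defs.sphere_def nbrs_def by auto
  then have "nbrs V E v \<inter> sphere V E 0 x = {x}" using sphere_0[OF x] by auto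
  then show ?thesis
    using card_nbrs_inter_sphere_same[OF x v(1) v1] ball_vector_dist_1[OF v(1) v1] k t
    unfolding adj_ball_vector by (simp add: field_simps power2_eq_square)
qed

lemma adj_ball_vector_dist_2:
  assumes x: "x \<in> V" and v: "v \<in> V" "gdist V E x v = 2"
  shows "adj (ball_vector x t) v = t / k * c 2"
  using nbrs_inter_sphere_far[OF x, of v 0] card_nbrs_inter_sphere_pred[OF x v, simplified] v(2)
  unfolding adj_ball_vector by simp

lemma adj_ball_vector_far:
  assumes "x \<in> V" "3 \<le> gdist V E x v"
  shows "adj (ball_vector x t) v = 0"
  using nbrs_inter_sphere_far[OF assms(1), of v 0] nbrs_inter_sphere_far[OF assms(1), of v 1] assms(2)
  unfolding adj_ball_vector by simp

lemma inprod_adj_ball_vector: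
  assumes "x \<in> V" "0 < k" "t\<^sup>2 = a 1 * t + k"
  shows "inprod (ball_vector x t) (adj (ball_vector x t)) = t * inprod (ball_vector x t) (ball_vector x t)"
  using adj_ball_vector_eigen[OF assms(1) _ _ assms(2,3)] ball_vector_support
  by (intro inprod_adj_if_eigen_on_support) blast

lemma sum_ball_vector:
  assumes "x \<in> V" "0 < k"
  shows "sum (ball_vector x t) V = 1 + t"
proof -
  have "sum (ball_vector x t) V = card (V \<inter> sphere V E 0 x) + t / k * card (V \<inter> sphere V E 1 x)"
    unfolding ball_vector_def sum.distrib sum_distrib_left[symmetric] sum_indicator_real[OF finite_V] ..
  also have "\<dots> = 1 + t"
    using assms sphere_0 sphere_1 nbrs_subset card_nbrs by (simp add: Int_absorb1)
  finally show ?thesis .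
qed

lemma least_eigenvalue_lt:
  fixes \<theta> :: "nat \<Rightarrow> real"
  assumes eig: "{t. adj_eigenvalue V E t} = \<theta> ` {0..D}"
    and dec: "\<And>i j. i < j \<Longrightarrow> j \<le> D \<Longrightarrow> \<theta> j < \<theta> i"
    and "2 \<le> diameter V E" and k: "0 < k"
  shows "\<theta> D < (a 1 - sqrt ((a 1)\<^sup>2 + 4 * k)) / 2"
proof -
  define s where "s = (a 1 - sqrt ((a 1)\<^sup>2 + 4 * k)) / 2"
  have s: "s\<^sup>2 = a 1 * s + k" "s < 0"
    using quadratic_root_minus[of "a 1" k] quadratic_roots_sign(1)[of k "a 1"] k
    unfolding s_def by simp_all
  obtain x w where x: "x \<in> V" and w: "w \<in> V" "gdist V E x w = 2"
    using exists_gdist_eq assms(3) by metis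
  have "adj (ball_vector x s) w \<noteq> s * ball_vector x s w"
    using adj_ball_vector_dist_2[OF x w] ball_vector_eq_0 w(2) c_2_pos[OF x w] s(2) k by simp
  then show ?thesis
    using least_eigenvalue_lt_rayleigh[OF eig dec _ inprod_adj_ball_vector[OF x k s(1)]]
      ball_vector_center[OF x] x w(1) unfolding s_def by force
qed

lemma second_eigenvalue_ge_far_test_vector:
  fixes \<theta> :: "nat \<Rightarrow> real"
  assumes eig: "{t. adj_eigenvalue V E t} = \<theta> ` {0..D}"
    and dec: "\<And>i j. i < j \<Longrightarrow> j \<le> D \<Longrightarrow> \<theta> j < \<theta> i"
    and \<theta>0: "\<theta> 0 = real k" and "1 \<le> D" and k: "0 < k" and x: "x \<in> V"
    and m: "m \<le> (a 1 + sqrt ((a 1)\<^sup>2 + 4 * k)) / 2"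
    and h: "m * inprod h h \<le> inprod h (adj h)" "sum h V \<noteq> 0"
    and far: "\<And>v. v \<in> V \<Longrightarrow> gdist V E x v \<le> 1 \<Longrightarrow> h v = 0 \<and> adj h v = 0"
  shows "m \<le> \<theta> 1"
proof -
  define r where "r = (a 1 + sqrt ((a 1)\<^sup>2 + 4 * k)) / 2"
  define g where "g = ball_vector x r"
  have "r\<^sup>2 = a 1 * r + k"
    using quadratic_root_plus[of "a 1" k] k unfolding r_def by simp
  then have "inprod g (adj g) = r * inprod g g"
    unfolding g_def using inprod_adj_ball_vector[OF x k] by blast
  moreover have "m * inprod g g \<le> r * inprod g g"
    using mult_right_mono[OF m[folded r_def] inprod_nonneg[of g]] .
  moreover have "inprod g h = 0" "inprod g (adj h) = 0"
    using far ball_vector_support unfolding g_def by (auto intro: inprod_eq_0_if_disjoint_support)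
  moreover have "g x \<noteq> 0" "h x = 0"
    using ball_vector_center[OF x] far[OF x] gdist_eq_0_iff[OF x x] unfolding g_def by auto
  ultimately obtain p where "\<exists>v\<in>V. p v \<noteq> 0" "sum p V = 0" "m * inprod p p \<le> inprod p (adj p)"
    using exists_sum_zero_combination[of m g h x] h x by auto
  then show ?thesis
    using second_eigenvalue_ge[OF _ eig dec \<theta>0 \<open>1 \<le> D\<close>] card_nbrs by blast
qed

lemma second_eigenvalue_ge_min:
  fixes \<theta> :: "nat \<Rightarrow> real"
  assumes eig: "{t. adj_eigenvalue V E t} = \<theta> ` {0..D}"
    and dec: "\<And>i j. i < j \<Longrightarrow> j \<le> D \<Longrightarrow> \<theta> j < \<theta> i"
    and \<theta>0: "\<theta> 0 = real k" and "1 \<le> D" and k: "0 < k" and "3 \<le> diameter V E"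
  shows "min ((a 1 + sqrt ((a 1)\<^sup>2 + 4 * k)) / 2) (a 3) \<le> \<theta> 1"
proof -
  obtain x w where x: "x \<in> V" and w: "w \<in> V" "gdist V E x w = 3"
    using exists_gdist_eq assms(6) by metis
  define h :: "'a \<Rightarrow> real" where "h = indicator (sphere V E 3 x)"
  have "inprod h (adj h) = a 3 * inprod h h"
    using card_nbrs_inter_sphere_same[OF x]
    by (intro inprod_adj_if_eigen_on_support)
      (auto simp: h_def adj_indicator Defs.sphere_def split: split_indicator_asm)
  then have "min ((a 1 + sqrt ((a 1)\<^sup>2 + 4 * k)) / 2) (a 3) * inprod h h \<le> inprod h (adj h)"
    using inprod_nonneg[of h] by (simp add: mult_right_mono)
  moreover have "sum h V \<noteq> 0"
    using w finite_V unfolding h_def sum_indicator_real[OF finite_V] by (auto simp: Defs.sphere_def)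
  moreover have "h v = 0 \<and> adj h v = 0" if "gdist V E x v \<le> 1" for v
    using that nbrs_inter_sphere_far[OF x, of v 3] unfolding h_def adj_indicator
    by (simp add: Defs.sphere_def)
  moreover have "min ((a 1 + sqrt ((a 1)\<^sup>2 + 4 * k)) / 2) (a 3) \<le> (a 1 + sqrt ((a 1)\<^sup>2 + 4 * k)) / 2"
    by (rule min.cobounded1)
  ultimately show ?thesis
    by (intro second_eigenvalue_ge_far_test_vector[OF eig dec \<theta>0 \<open>1 \<le> D\<close> k x, of _ h]) auto
qed

lemma second_eigenvalue_ge_root:
  fixes \<theta> :: "nat \<Rightarrow> real"
  assumes eig: "{t. adj_eigenvalue V E t} = \<theta> ` {0..D}"
    and dec: "\<And>i j. i < j \<Longrightarrow> j \<le> D \<Longrightarrow> \<theta> j < \<theta> i"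
    and \<theta>0: "\<theta> 0 = real k" and "1 \<le> D" and k: "0 < k" and "4 \<le> diameter V E"
  shows "(a 1 + sqrt ((a 1)\<^sup>2 + 4 * k)) / 2 \<le> \<theta> 1"
proof -
  define r where "r = (a 1 + sqrt ((a 1)\<^sup>2 + 4 * k)) / 2"
  have r: "r\<^sup>2 = a 1 * r + k" "0 < r"
    using quadratic_root_plus[of "a 1" k] quadratic_roots_sign(2)[of k "a 1"] k
    unfolding r_def by simp_all
  obtain x y where x: "x \<in> V" and y: "y \<in> V" "gdist V E x y = 4"
    using exists_gdist_eq assms(6) by metis
  define h where "h = ball_vector y r"
  have "r * inprod h h \<le> inprod h (adj h)"
    unfolding h_def using inprod_adj_ball_vector[OF y(1) k r(1)] by simp
  moreover have "sum h V \<noteq> 0" unfolding h_def using sum_ball_vector[OF y(1) k] r(2) by simp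
  moreover have "h v = 0 \<and> adj h v = 0" if "v \<in> V" "gdist V E x v \<le> 1" for v
  proof -
    have "gdist V E x y \<le> gdist V E x v + gdist V E y v"
      using gdist_triangle[OF x that(1) y(1)] gdist_commute[OF that(1) y(1)] by simp
    then have "3 \<le> gdist V E y v" using that(2) y(2) by simp
    then show ?thesis
      unfolding h_def using ball_vector_eq_0 adj_ball_vector_far[OF y(1)] by simp
  qed
  ultimately show ?thesis
    using second_eigenvalue_ge_far_test_vector[OF eig dec \<theta>0 \<open>1 \<le> D\<close> k x, of r h]
    unfolding r_def by simp
qed

end

theorem theorem3p1:
  fixes V :: "'a set" and E :: "'a \<Rightarrow> 'a \<Rightarrow> bool"
    and b c :: "nat \<Rightarrow> nat" and \<theta> :: "nat \<Rightarrow> real" and k D :: nat and a :: "nat \<Rightarrow> real"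
  assumes drg: "distance_regular_with V E b c"
    and k_def: "k = b 0"
    and a_def: "\<And>i. a i = real k - real (b i) - real (c i)"
    and D_def: "D = diameter V E"
    and k3: "k \<ge> 3"
    and D3: "D \<ge> 3"
    and eig: "{t. adj_eigenvalue V E t} = \<theta> ` {0..D}"
    and dec: "\<And>i j. i < j \<Longrightarrow> j \<le> D \<Longrightarrow> \<theta> j < \<theta> i"
    and th0: "\<theta> 0 = real k"
  shows "\<theta> D < (a 1 - sqrt ((a 1)\<^sup>2 + 4 * real k)) / 2
     \<and> \<theta> 1 \<ge> min ((a 1 + sqrt ((a 1)\<^sup>2 + 4 * real k)) / 2) (a 3)
     \<and> (D \<ge> 4 \<longrightarrow> \<theta> 1 \<ge> (a 1 + sqrt ((a 1)\<^sup>2 + 4 * real k)) / 2)"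
proof -
  interpret G: distance_regular_graph V E b c by (rule distance_regular_graph.intro[OF drg])
  have k: "G.k = k" unfolding G.k_def k_def ..
  have a: "G.a = a" using a_def unfolding G.a_def k by auto
  have k_pos: "0 < G.k" using k3 k by simp
  have th0': "\<theta> 0 = real G.k" using th0 k by simp
  have "\<theta> D < (a 1 - sqrt ((a 1)\<^sup>2 + 4 * real k)) / 2"
    using G.least_eigenvalue_lt[OF eig dec _ k_pos] D_def D3 unfolding a k by simp
  moreover have "\<theta> 1 \<ge> min ((a 1 + sqrt ((a 1)\<^sup>2 + 4 * real k)) / 2) (a 3)"
    using G.second_eigenvalue_ge_min[OF eig dec th0' _ k_pos] D_def D3 unfolding a k by simp
  moreover have "D \<ge> 4 \<longrightarrow> \<theta> 1 \<ge> (a 1 + sqrt ((a 1)\<^sup>2 + 4 * real k)) / 2"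
    using G.second_eigenvalue_ge_root[OF eig dec th0' _ k_pos] D_def unfolding a k by simp
  ultimately show ?thesis by blast
qed

end
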